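(* Let $a>b>0$, $c>0$, let $C=\{(x,y,z)\in\mathbb{R}^3:\frac{x^2}{a^2}+\frac{y^2}{b^2}-\frac{z^2}{c^2}=0\}$, and consider the spherical conic $C\cap\mathbb{S}^2$. The orthogonal projection of this conic onto the $yz$-plane (the plane of the principal and minor axes) is contained in a hyperbola, and the lines in which the two cyclic planes of $C$ intersect the $yz$-plane are the asymptotes of this hyperbola.
   Context: A cyclic plane of a quadratic cone (apex at the origin) is a plane through the origin such that every parallel plane not through the origin intersects the cone in a circle (with respect to the standard Euclidean metric of $\mathbb{R}^3$). $\mathbb{S}^2$ is the unit sphere. *)

theory Defs
  imports "HOL-Analysis.Analysis"
begin

definition cone_C :: "real \<Rightarrow> real \<Rightarrow> real \<Rightarrow> (real \<times> real \<times> real) set" where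
  "cone_C a b c = {(x,y,z). x\<^sup>2 / a\<^sup>2 + y\<^sup>2 / b\<^sup>2 - z\<^sup>2 / c\<^sup>2 = 0}"

definition cyclic_plane :: "(real \<times> real \<times> real) set \<Rightarrow> (real \<times> real \<times> real) set \<Rightarrow> bool" where
  "cyclic_plane K P \<longleftrightarrow> (\<exists>n. n \<noteq> 0 \<and> P = {v. n \<bullet> v = 0} \<and>
     (\<forall>d::real. d \<noteq> 0 \<longrightarrow> (\<exists>p r. r > 0 \<and> n \<bullet> p = d \<and>
        K \<inter> {v. n \<bullet> v = d} = {v. n \<bullet> v = d \<and> dist v p = r})))"

definition proj_yz :: "real \<times> real \<times> real \<Rightarrow> real \<times> real" where
  "proj_yz v = (case v of (x,y,z) \<Rightarrow> (y,z))"

definition yz_plane :: "(real \<times> real \<times> real) set" where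
  "yz_plane = {v. fst v = 0}"

text \<open>H is a (nondegenerate) hyperbola in the plane, given by a conic equation
  A y^2 + B y z + C z^2 + D y + E z + F = 0 with B^2 - 4AC > 0 and nonzero determinant of the
  conic matrix; As is the set of its asymptotes: the lines through the centre in the two
  directions annihilated by the quadratic part.\<close>
definition hyperbola_with_asymptotes :: "(real \<times> real) set \<Rightarrow> (real \<times> real) set set \<Rightarrow> bool" where
  "hyperbola_with_asymptotes H As \<longleftrightarrow>
    (\<exists>A B C D E F :: real.
       B\<^sup>2 - 4 * A * C > 0 \<and>
       A * (C * F - E\<^sup>2 / 4) - (B / 2) * (B / 2 * F - E / 2 * D / 2)
         + (D / 2) * (B / 2 * E / 2 - C * D / 2) \<noteq> 0 \<and>
       H = {(y,z). A * y\<^sup>2 + B * y * z + C * z\<^sup>2 + D * y + E * z + F = 0} \<and>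
       (\<exists>y0 z0. 2 * A * y0 + B * z0 + D = 0 \<and> B * y0 + 2 * C * z0 + E = 0 \<and>
          As = {{(y0 + t * u, z0 + t * w) | t. True} | u w.
                  (u, w) \<noteq> (0, 0) \<and> A * u\<^sup>2 + B * u * w + C * w\<^sup>2 = 0}))"

end

theory Submission
  imports Defs
begin

text \<open>With \<open>q1 = 1/a\<^sup>2\<close>, \<open>q2 = 1/b\<^sup>2\<close>, \<open>q3 = -1/c\<^sup>2\<close> we have \<open>q3 < 0 < q1 < q2\<close>; put
  \<open>\<alpha>\<^sup>2 = q2 - q1\<close> and \<open>\<beta>\<^sup>2 = q1 - q3\<close>. The cone form factors as
  \<open>q1 |v|\<^sup>2 + (\<alpha> y + \<beta> z) (\<alpha> y - \<beta> z)\<close>, so on a plane \<open>\<alpha> y \<plusminus> \<beta> z = d\<close> the cone coincides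
  with a sphere and its section is a circle. Conversely, if the sections parallel to a plane
  are circles, the cone form is a multiple of \<open>|v|\<^sup>2\<close> on that plane, and comparing coefficients
  leaves only these two planes. On the unit sphere \<open>x\<^sup>2 = 1 - y\<^sup>2 - z\<^sup>2\<close>, so the projected conic
  satisfies \<open>\<alpha>\<^sup>2 y\<^sup>2 - \<beta>\<^sup>2 z\<^sup>2 + q1 = 0\<close>, a hyperbola with asymptotes \<open>\<alpha> y \<plusminus> \<beta> z = 0\<close>,
  which are the traces of the cyclic planes in the \<open>yz\<close>-plane.\<close>

lemma quadratic_eq_0_iff_dist:
  fixes v w :: "'a::real_inner"
  assumes "q > 0"
  shows "q * (v \<bullet> v) + w \<bullet> v = 0 \<longleftrightarrow> dist v (- (1 / (2 * q)) *\<^sub>R w) = norm w / (2 * q)"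
proof -
  have "(dist v (- (1 / (2 * q)) *\<^sub>R w))\<^sup>2 = v \<bullet> v + (w \<bullet> v) / q + (w \<bullet> w) / (4 * q\<^sup>2)"
    using assms unfolding dist_norm power2_norm_eq_inner
    by (simp add: inner_add_left inner_add_right inner_commute field_simps power2_eq_square)
  also have "\<dots> = (norm w / (2 * q))\<^sup>2 + (q * (v \<bullet> v) + w \<bullet> v) / q"
  proof -
    have "(norm w / (2 * q))\<^sup>2 = (w \<bullet> w) / (4 * q\<^sup>2)"
      unfolding power_divide power_mult_distrib power2_norm_eq_inner by simp
    moreover have "(q * (v \<bullet> v) + w \<bullet> v) / q = v \<bullet> v + (w \<bullet> v) / q"
      using assms by (simp add: add_divide_distrib)
    ultimately show ?thesis by linarith
  qed
  finally have "(dist v (- (1 / (2 * q)) *\<^sub>R w))\<^sup>2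
      = (norm w / (2 * q))\<^sup>2 + (q * (v \<bullet> v) + w \<bullet> v) / q" .
  moreover have "dist v (- (1 / (2 * q)) *\<^sub>R w) = norm w / (2 * q) \<longleftrightarrow>
      (dist v (- (1 / (2 * q)) *\<^sub>R w))\<^sup>2 = (norm w / (2 * q))\<^sup>2"
    using assms by (intro power2_eq_iff_nonneg[symmetric]) auto
  ultimately show ?thesis using assms by simp
qed

lemma hyperplane_inter_sphere_eq_circle:
  fixes n c :: "'a::real_inner"
  assumes "n \<noteq> 0" "R \<ge> 0" "(d - n \<bullet> c)\<^sup>2 < R\<^sup>2 * (n \<bullet> n)"
  shows "\<exists>p r. r > 0 \<and> n \<bullet> p = d \<and>
           {v. n \<bullet> v = d \<and> dist v c = R} = {v. n \<bullet> v = d \<and> dist v p = r}"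
proof -
  have nn: "n \<bullet> n > 0" using assms(1) by simp
  define s where "s = (d - n \<bullet> c) / (n \<bullet> n)"
  define p where "p = c + s *\<^sub>R n"
  define r where "r = sqrt (R\<^sup>2 - s\<^sup>2 * (n \<bullet> n))"
  have np: "n \<bullet> p = d" using nn by (simp add: p_def s_def inner_add_right)
  have "s\<^sup>2 * (n \<bullet> n) < R\<^sup>2"
    using assms(3) nn by (simp add: s_def power_divide divide_less_eq power2_eq_square)
  then have r: "r > 0" "r\<^sup>2 = R\<^sup>2 - s\<^sup>2 * (n \<bullet> n)" by (simp_all add: r_def)
  have pythagoras: "(dist v c)\<^sup>2 = (dist v p)\<^sup>2 + s\<^sup>2 * (n \<bullet> n)" if "n \<bullet> v = d" for v
  proof -
    have orth: "(v - p) \<bullet> n = 0" using that np by (simp add: inner_commute[of "v - p"] inner_diff_right)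
    have "(v - c) \<bullet> (v - c) = ((v - p) + s *\<^sub>R n) \<bullet> ((v - p) + s *\<^sub>R n)"
      by (simp add: p_def algebra_simps)
    also have "\<dots> = (v - p) \<bullet> (v - p) + s\<^sup>2 * (n \<bullet> n)"
      using orth by (simp add: inner_add_left inner_add_right inner_commute[of n "v - p"]
          power2_eq_square distrib_left)
    finally show ?thesis by (simp add: dist_norm power2_norm_eq_inner)
  qed
  have "dist v c = R \<longleftrightarrow> dist v p = r" if "n \<bullet> v = d" for v
  proof -
    have "dist v c = R \<longleftrightarrow> (dist v c)\<^sup>2 = R\<^sup>2"
      by (rule power2_eq_iff_nonneg[symmetric]) (use assms(2) in auto)
    also have "\<dots> \<longleftrightarrow> (dist v p)\<^sup>2 = r\<^sup>2" using pythagoras[OF that] r(2) by linarith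
    also have "\<dots> \<longleftrightarrow> dist v p = r"
      by (rule power2_eq_iff_nonneg) (use r(1) in auto)
    finally show ?thesis .
  qed
  then show ?thesis using r np by blast
qed

lemma cyclic_plane_of_factorization:
  fixes n m :: "real \<times> real \<times> real"
  assumes q: "q > 0" and n: "n \<noteq> 0" and disc: "(2 * q + n \<bullet> m)\<^sup>2 < (n \<bullet> n) * (m \<bullet> m)"
  shows "cyclic_plane {v. q * (v \<bullet> v) + (n \<bullet> v) * (m \<bullet> v) = 0} {v. n \<bullet> v = 0}"
proof -
  let ?K = "{v. q * (v \<bullet> v) + (n \<bullet> v) * (m \<bullet> v) = 0}"
  have "\<exists>p r. r > 0 \<and> n \<bullet> p = d \<and> ?K \<inter> {v. n \<bullet> v = d} = {v. n \<bullet> v = d \<and> dist v p = r}"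
    if d: "d \<noteq> 0" for d
  proof -
    define c where "c = - (1 / (2 * q)) *\<^sub>R (d *\<^sub>R m)"
    define R where "R = norm (d *\<^sub>R m) / (2 * q)"
    have "?K \<inter> {v. n \<bullet> v = d} = {v. n \<bullet> v = d \<and> q * (v \<bullet> v) + (d *\<^sub>R m) \<bullet> v = 0}"
      by auto
    also have "\<dots> = {v. n \<bullet> v = d \<and> dist v c = R}"
      unfolding c_def R_def quadratic_eq_0_iff_dist[OF q] ..
    finally have K: "?K \<inter> {v. n \<bullet> v = d} = {v. n \<bullet> v = d \<and> dist v c = R}" .
    have "d - n \<bullet> c = d * (2 * q + n \<bullet> m) / (2 * q)"
      using q by (simp add: c_def field_simps)
    then have "(d - n \<bullet> c)\<^sup>2 = d\<^sup>2 / (2 * q)\<^sup>2 * (2 * q + n \<bullet> m)\<^sup>2"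
      by (simp add: power_divide power_mult_distrib)
    also have "\<dots> < d\<^sup>2 / (2 * q)\<^sup>2 * ((n \<bullet> n) * (m \<bullet> m))"
      using disc d q by (intro mult_strict_left_mono) auto
    also have "\<dots> = R\<^sup>2 * (n \<bullet> n)"
      by (simp add: R_def power_divide power_mult_distrib power2_norm_eq_inner)
    finally have "(d - n \<bullet> c)\<^sup>2 < R\<^sup>2 * (n \<bullet> n)" .
    moreover have "R \<ge> 0" using q by (simp add: R_def)
    ultimately show ?thesis
      unfolding K using hyperplane_inter_sphere_eq_circle[OF n] by blast
  qed
  then show ?thesis unfolding cyclic_plane_def using n by blast
qed

lemma cyclic_plane_section_proportional:
  fixes Q :: "real \<times> real \<times> real \<Rightarrow> real"
  assumes cyc: "cyclic_plane {v. Q v = 0} P"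
    and parallelogram: "\<And>v w. Q (v + w) + Q (v - w) = 2 * Q v + 2 * Q w"
    and homogeneous: "\<And>t v. Q (t *\<^sub>R v) = t\<^sup>2 * Q v"
  shows "\<exists>n k. n \<noteq> 0 \<and> P = {v. n \<bullet> v = 0} \<and> (\<forall>u. n \<bullet> u = 0 \<longrightarrow> Q u = k * (u \<bullet> u))"
proof -
  obtain n where n: "n \<noteq> 0" "P = {v. n \<bullet> v = 0}" and
    "\<exists>p r. r > 0 \<and> n \<bullet> p = 1 \<and>
      {v. Q v = 0} \<inter> {v. n \<bullet> v = 1} = {v. n \<bullet> v = 1 \<and> dist v p = r}"
    using cyc unfolding cyclic_plane_def by force
  then obtain p r where r: "r > 0" and np: "n \<bullet> p = 1"
    and K: "{v. Q v = 0} \<inter> {v. n \<bullet> v = 1} = {v. n \<bullet> v = 1 \<and> dist v p = r}" by blast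
  have "Q u = (- Q p / r\<^sup>2) * (u \<bullet> u)" if u: "n \<bullet> u = 0" for u
  proof (cases "u = 0")
    case True
    then show ?thesis using homogeneous[of 0 0] by simp
  next
    case False
    define t where "t = r / norm u"
    have t: "t\<^sup>2 * (u \<bullet> u) = r\<^sup>2"
      using False by (simp add: t_def power_divide power2_norm_eq_inner)
    have "Q (p + s *\<^sub>R u) = 0" if "\<bar>s\<bar> = t" for s
    proof -
      have "dist (p + s *\<^sub>R u) p = r"
        using that r False by (simp add: dist_norm t_def)
      moreover have "n \<bullet> (p + s *\<^sub>R u) = 1" using np u by (simp add: inner_add_right)
      ultimately have "p + s *\<^sub>R u \<in> {v. Q v = 0} \<inter> {v. n \<bullet> v = 1}" unfolding K by blast
      then show ?thesis by blast
    qed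
    moreover have "\<bar>t\<bar> = t" "\<bar>- t\<bar> = t" using r by (simp_all add: t_def)
    ultimately have "Q (p + t *\<^sub>R u) = 0" "Q (p - t *\<^sub>R u) = 0"
      by (metis, metis scaleR_minus_left diff_conv_add_uminus)
    then have "t\<^sup>2 * Q u = - Q p"
      using parallelogram[of p "t *\<^sub>R u"] homogeneous[of t u] by simp
    then have "r\<^sup>2 * Q u = - Q p * (u \<bullet> u)"
      using t by (metis mult.assoc mult.commute)
    then show ?thesis using r by (simp add: field_simps)
  qed
  then show ?thesis using n by blast
qed

lemma diagonal_form_vanishing_on_plane:
  fixes e1 e2 e3 n1 n2 n3 :: real
  assumes vanish: "\<And>x y z. n1 * x + n2 * y + n3 * z = 0 \<Longrightarrow> e1 * x\<^sup>2 + e2 * y\<^sup>2 + e3 * z\<^sup>2 = 0"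
  shows "e1 * n2\<^sup>2 + e2 * n1\<^sup>2 = 0" and "e1 * n3\<^sup>2 + e3 * n1\<^sup>2 = 0"
    and "e2 * n3\<^sup>2 + e3 * n2\<^sup>2 = 0" and "e1 * n2 * n3 = 0"
    and "e2 * n1 * n3 = 0" and "e3 * n1 * n2 = 0"
proof -
  show d12: "e1 * n2\<^sup>2 + e2 * n1\<^sup>2 = 0"
    using vanish[of n2 "- n1" 0] by (simp add: algebra_simps)
  show d13: "e1 * n3\<^sup>2 + e3 * n1\<^sup>2 = 0"
    using vanish[of n3 0 "- n1"] by (simp add: algebra_simps)
  show d23: "e2 * n3\<^sup>2 + e3 * n2\<^sup>2 = 0"
    using vanish[of 0 n3 "- n2"] by (simp add: algebra_simps)
  have "e1 * (n2 + n3)\<^sup>2 + e2 * n1\<^sup>2 + e3 * n1\<^sup>2 = 0"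
    using vanish[of "n2 + n3" "- n1" "- n1"] by (simp add: algebra_simps)
  moreover have "e1 * (n2 + n3)\<^sup>2 = e1 * n2\<^sup>2 + e1 * n3\<^sup>2 + 2 * (e1 * n2 * n3)"
    by (simp add: power2_eq_square algebra_simps)
  ultimately show "e1 * n2 * n3 = 0" using d12 d13 by linarith
  have "e1 * n2\<^sup>2 + e2 * (n3 - n1)\<^sup>2 + e3 * n2\<^sup>2 = 0"
    using vanish[of n2 "n3 - n1" "- n2"] by (simp add: algebra_simps)
  moreover have "e2 * (n3 - n1)\<^sup>2 = e2 * n3\<^sup>2 + e2 * n1\<^sup>2 - 2 * (e2 * n1 * n3)"
    by (simp add: power2_eq_square algebra_simps)
  ultimately show "e2 * n1 * n3 = 0" using d12 d23 by linarith
  have "e1 * n3\<^sup>2 + e2 * n3\<^sup>2 + e3 * (n1 + n2)\<^sup>2 = 0"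
    using vanish[of n3 n3 "- (n1 + n2)"] by (simp add: algebra_simps power2_eq_square)
  moreover have "e3 * (n1 + n2)\<^sup>2 = e3 * n1\<^sup>2 + e3 * n2\<^sup>2 + 2 * (e3 * n1 * n2)"
    by (simp add: power2_eq_square algebra_simps)
  ultimately show "e3 * n1 * n2 = 0" using d13 d23 by linarith
qed

lemma diagonal_form_vanishing_on_plane_normal:
  fixes e1 e2 e3 n1 n2 n3 :: real
  assumes e: "e3 < e1" "e1 < e2" and n: "(n1, n2, n3) \<noteq> 0"
    and vanish: "\<And>x y z. n1 * x + n2 * y + n3 * z = 0 \<Longrightarrow> e1 * x\<^sup>2 + e2 * y\<^sup>2 + e3 * z\<^sup>2 = 0"
  shows "n1 = 0 \<and> e1 = 0 \<and> e2 * n3\<^sup>2 + e3 * n2\<^sup>2 = 0"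
proof -
  note d = diagonal_form_vanishing_on_plane[of n1 n2 n3 e1 e2 e3, OF vanish]
  have n1: "n1 = 0"
  proof (rule ccontr)
    assume "n1 \<noteq> 0"
    then have sq: "n1\<^sup>2 > 0" and "e2 * n3 = 0" "e3 * n2 = 0" using d(5,6) by auto
    then consider "e2 = 0" "n2 = 0" | "n3 = 0" "e3 = 0" | "n3 = 0" "n2 = 0"
      using e by fastforce
    then show False
    proof cases
      case 1
      then have "e1 * n3\<^sup>2 \<le> 0" "e3 * n1\<^sup>2 < 0"
        using e sq by (simp_all add: mult_nonpos_nonneg mult_neg_pos)
      then show False using d(2) by linarith
    next
      case 2
      then have "e1 * n2\<^sup>2 \<ge> 0" "e2 * n1\<^sup>2 > 0" using e sq by simp_all
      then show False using d(1) by linarith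
    next
      case 3
      then have "e2 * n1\<^sup>2 = 0" "e3 * n1\<^sup>2 = 0" using d(1,2) by simp_all
      then show False using e sq by simp
    qed
  qed
  moreover have "e1 = 0"
    using d(1,2) n n1 by (auto simp: zero_prod_def)
  ultimately show ?thesis using d(3) by blast
qed

lemma cyclic_plane_diagonal_cone_normal:
  fixes q1 q2 q3 :: real
  assumes q: "q3 < q1" "q1 < q2"
    and cyc: "cyclic_plane {(x, y, z). q1 * x\<^sup>2 + q2 * y\<^sup>2 + q3 * z\<^sup>2 = 0} P"
  shows "\<exists>n2 n3. (n2, n3) \<noteq> (0, 0) \<and> (q2 - q1) * n3\<^sup>2 = (q1 - q3) * n2\<^sup>2 \<and>
           P = {v. (0, n2, n3) \<bullet> v = 0}"
proof -
  define Q where "Q = (\<lambda>(x, y, z). q1 * x\<^sup>2 + q2 * y\<^sup>2 + q3 * z\<^sup>2)"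
  have "{(x, y, z). q1 * x\<^sup>2 + q2 * y\<^sup>2 + q3 * z\<^sup>2 = 0} = {v. Q v = 0}"
    by (auto simp: Q_def)
  moreover have "Q (v + w) + Q (v - w) = 2 * Q v + 2 * Q w" for v w
    by (cases v; cases w) (simp add: Q_def power2_eq_square algebra_simps)
  moreover have "Q (t *\<^sub>R v) = t\<^sup>2 * Q v" for t v
    by (cases v) (simp add: Q_def power_mult_distrib algebra_simps)
  ultimately obtain n k where n: "n \<noteq> 0" "P = {v. n \<bullet> v = 0}"
    and proportional: "\<And>u. n \<bullet> u = 0 \<Longrightarrow> Q u = k * (u \<bullet> u)"
    using cyclic_plane_section_proportional cyc by metis
  obtain n1 n2 n3 where nn: "n = (n1, n2, n3)" by (cases n)
  have "(q1 - k) * x\<^sup>2 + (q2 - k) * y\<^sup>2 + (q3 - k) * z\<^sup>2 = 0"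
    if "n1 * x + n2 * y + n3 * z = 0" for x y z
    using proportional[of "(x, y, z)"] that
    by (simp add: nn Q_def inner_Pair power2_eq_square algebra_simps)
  then have "n1 = 0 \<and> q1 - k = 0 \<and> (q2 - k) * n3\<^sup>2 + (q3 - k) * n2\<^sup>2 = 0"
    using q n(1) unfolding nn by (intro diagonal_form_vanishing_on_plane_normal) auto
  then show ?thesis
    using n by (auto simp: nn zero_prod_def algebra_simps)
qed

lemma cyclic_planes_of_diagonal_cone:
  fixes q1 q2 q3 :: real
  assumes q: "q3 < 0" "0 < q1" "q1 < q2"
  defines "\<alpha> \<equiv> sqrt (q2 - q1)" and "\<beta> \<equiv> sqrt (q1 - q3)"
  shows "{P. cyclic_plane {(x, y, z). q1 * x\<^sup>2 + q2 * y\<^sup>2 + q3 * z\<^sup>2 = 0} P} =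
           {{v. (0, \<alpha>, \<beta>) \<bullet> v = 0}, {v. (0, \<alpha>, - \<beta>) \<bullet> v = 0}}"
    (is "{P. cyclic_plane ?K P} = {?P1, ?P2}")
proof -
  have \<alpha>: "\<alpha> > 0" "\<alpha>\<^sup>2 = q2 - q1" and \<beta>: "\<beta> > 0" "\<beta>\<^sup>2 = q1 - q3"
    using q by (simp_all add: \<alpha>_def \<beta>_def)
  let ?n = "(0, \<alpha>, \<beta>) :: real \<times> real \<times> real" and ?m = "(0, \<alpha>, - \<beta>) :: real \<times> real \<times> real"
  have "q1 * x\<^sup>2 + q2 * y\<^sup>2 + q3 * z\<^sup>2 = q1 * (x\<^sup>2 + y\<^sup>2 + z\<^sup>2) + (\<alpha> * y + \<beta> * z) * (\<alpha> * y - \<beta> * z)"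
    for x y z
    using \<alpha>(2) \<beta>(2) by algebra
  then have K: "?K = {v. q1 * (v \<bullet> v) + (?n \<bullet> v) * (?m \<bullet> v) = 0}"
    by (auto simp: inner_Pair power2_eq_square add.assoc)
  have "(2 * q1 + ?n \<bullet> ?m)\<^sup>2 = (q2 + q3)\<^sup>2" "?n \<bullet> ?n = q2 - q3" "?m \<bullet> ?m = q2 - q3"
    using \<alpha> \<beta> by (simp_all add: inner_Pair power2_eq_square[symmetric])
  moreover have "(q2 + q3)\<^sup>2 < (q2 - q3) * (q2 - q3)"
    using q mult_pos_neg[of q2 q3] by (simp add: power2_eq_square algebra_simps)
  ultimately have disc: "(2 * q1 + ?n \<bullet> ?m)\<^sup>2 < (?n \<bullet> ?n) * (?m \<bullet> ?m)"
    "(2 * q1 + ?m \<bullet> ?n)\<^sup>2 < (?m \<bullet> ?m) * (?n \<bullet> ?n)"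
    by (simp_all add: inner_commute)
  have "cyclic_plane ?K ?P1"
    unfolding K using cyclic_plane_of_factorization[OF q(2) _ disc(1)] \<alpha> by (simp add: zero_prod_def)
  moreover have "cyclic_plane ?K ?P2"
    unfolding K mult.commute[of "?n \<bullet> _"]
    using cyclic_plane_of_factorization[OF q(2) _ disc(2)] \<alpha> by (simp add: zero_prod_def)
  moreover have "P = ?P1 \<or> P = ?P2" if cyc: "cyclic_plane ?K P" for P
  proof -
    obtain n2 n3 where n: "(n2, n3) \<noteq> (0, 0)" "(q2 - q1) * n3\<^sup>2 = (q1 - q3) * n2\<^sup>2"
      and P: "P = {v. (0, n2, n3) \<bullet> v = 0}"
      using cyclic_plane_diagonal_cone_normal[OF _ _ cyc] q by auto
    have "(\<alpha> * n3)\<^sup>2 = (\<beta> * n2)\<^sup>2" using n(2) \<alpha> \<beta> by (simp add: power_mult_distrib)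
    then have sign: "\<alpha> * n3 = \<beta> * n2 \<or> \<alpha> * n3 = - (\<beta> * n2)" by (simp add: power2_eq_iff)
    then have "n2 \<noteq> 0" using n(1) \<alpha> by auto
    from sign obtain w where w: "w = ?n \<or> w = ?m" and "(0, n2, n3) = (n2 / \<alpha>) *\<^sub>R w"
    proof
      assume "\<alpha> * n3 = \<beta> * n2"
      then have "n3 = n2 / \<alpha> * \<beta>" using \<alpha> by (simp add: field_simps)
      then show thesis using that[of ?n] \<alpha> by simp
    next
      assume "\<alpha> * n3 = - (\<beta> * n2)"
      then have "n3 = n2 / \<alpha> * - \<beta>" using \<alpha> by (simp add: field_simps)
      then show thesis using that[of ?m] \<alpha> by simp
    qed
    then have "P = {v. w \<bullet> v = 0}"
      using P \<open>n2 \<noteq> 0\<close> \<alpha> by simp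
    then show ?thesis using w by blast
  qed
  ultimately show ?thesis by blast
qed

lemma line_through_origin_eq:
  fixes A B u w :: real
  assumes AB: "(A, B) \<noteq> (0, 0)" and uw: "(u, w) \<noteq> (0, 0)" and dir: "A * u + B * w = 0"
  shows "{(t * u, t * w) | t. True} = {(y, z). A * y + B * z = 0}"
proof (intro set_eqI iffI)
  fix v assume "v \<in> {(t * u, t * w) | t. True}"
  then obtain t where v: "v = (t * u, t * w)" by blast
  have "A * (t * u) + B * (t * w) = t * (A * u + B * w)" by (simp add: algebra_simps)
  then show "v \<in> {(y, z). A * y + B * z = 0}" using dir v by simp
next
  fix v assume "v \<in> {(y, z). A * y + B * z = 0}"
  then obtain y z where v: "v = (y, z)" and yz: "A * y + B * z = 0" by blast
  have "A * (u * z - w * y) = 0" "B * (u * z - w * y) = 0"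
    using dir yz by algebra+
  then have cross: "u * z = w * y" using AB by auto
  show "v \<in> {(t * u, t * w) | t. True}"
  proof (cases "u = 0")
    case True
    then have "w \<noteq> 0" "y = 0" using uw cross by auto
    then have "v = ((z / w) * u, (z / w) * w)" using v True by simp
    then show ?thesis by blast
  next
    case False
    then have "v = ((y / u) * u, (y / u) * w)" using v cross by (simp add: field_simps)
    then show ?thesis by blast
  qed
qed

lemma hyperbola_with_asymptotes_standard:
  fixes \<alpha> \<beta> q :: real
  assumes \<alpha>: "\<alpha> > 0" and \<beta>: "\<beta> > 0" and q: "q \<noteq> 0"
  shows "hyperbola_with_asymptotes {(y, z). \<alpha>\<^sup>2 * y\<^sup>2 - \<beta>\<^sup>2 * z\<^sup>2 + q = 0}
           {{(y, z). \<alpha> * y + \<beta> * z = 0}, {(y, z). \<alpha> * y - \<beta> * z = 0}}"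
proof -
  let ?L1 = "{(y, z). \<alpha> * y + \<beta> * z = 0}" and ?L2 = "{(y, z). \<alpha> * y - \<beta> * z = 0}"
  let ?asymptote = "\<lambda>u w. {(0 + t * u, 0 + t * w) | t. True}"
  let ?direction = "\<lambda>u w. (u, w) \<noteq> (0, 0) \<and> \<alpha>\<^sup>2 * u\<^sup>2 + 0 * u * w + - \<beta>\<^sup>2 * w\<^sup>2 = 0"
  have asymptote_cases: "L \<in> {?L1, ?L2}" if "?direction u w" "L = ?asymptote u w" for L u w
  proof -
    have "(\<alpha> * u)\<^sup>2 = (\<beta> * w)\<^sup>2" using that(1) by (simp add: power_mult_distrib)
    then consider "\<alpha> * u + \<beta> * w = 0" | "\<alpha> * u + - \<beta> * w = 0" by (auto simp: power2_eq_iff)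
    then show ?thesis
    proof cases
      case 1
      then have "L = ?L1" using line_through_origin_eq[of \<alpha> \<beta> u w] that \<alpha> by simp
      then show ?thesis by simp
    next
      case 2
      then have "L = ?L2" using line_through_origin_eq[of \<alpha> "- \<beta>" u w] that \<alpha> by simp
      then show ?thesis by simp
    qed
  qed
  have L1: "?direction \<beta> (- \<alpha>)" "?L1 = ?asymptote \<beta> (- \<alpha>)"
    using \<alpha> \<beta> line_through_origin_eq[of \<alpha> \<beta> \<beta> "- \<alpha>"] by (auto simp: power_mult_distrib)
  have L2: "?direction \<beta> \<alpha>" "?L2 = ?asymptote \<beta> \<alpha>"
    using \<alpha> \<beta> line_through_origin_eq[of \<alpha> "- \<beta>" \<beta> \<alpha>] by (auto simp: power_mult_distrib mult.commute)
  have "{?asymptote u w | u w. ?direction u w} = {?L1, ?L2}"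
  proof (intro equalityI subsetI)
    fix L assume "L \<in> {?asymptote u w | u w. ?direction u w}"
    then show "L \<in> {?L1, ?L2}" using asymptote_cases by blast
  next
    fix L assume "L \<in> {?L1, ?L2}"
    then have "L = ?asymptote \<beta> (- \<alpha>) \<and> ?direction \<beta> (- \<alpha>) \<or> L = ?asymptote \<beta> \<alpha> \<and> ?direction \<beta> \<alpha>"
      using L1 L2 by blast
    then show "L \<in> {?asymptote u w | u w. ?direction u w}" by blast
  qed
  then show ?thesis
    unfolding hyperbola_with_asymptotes_def using \<alpha> \<beta> q
    by - (rule exI[of _ "\<alpha>\<^sup>2"], rule exI[of _ 0], rule exI[of _ "- \<beta>\<^sup>2"],
        rule exI[of _ 0], rule exI[of _ 0], rule exI[of _ q], auto)
qed

lemma proj_yz_hyperplane_inter_yz_plane: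
  "proj_yz ` ({v. (n1, n2, n3) \<bullet> v = 0} \<inter> yz_plane) = {(y, z). n2 * y + n3 * z = 0}"
proof (intro set_eqI iffI)
  fix w assume "w \<in> proj_yz ` ({v. (n1, n2, n3) \<bullet> v = 0} \<inter> yz_plane)"
  then show "w \<in> {(y, z). n2 * y + n3 * z = 0}"
    by (auto simp: proj_yz_def yz_plane_def inner_Pair)
next
  fix w assume "w \<in> {(y, z). n2 * y + n3 * z = 0}"
  then obtain y z where "w = (y, z)" "n2 * y + n3 * z = 0" by blast
  then have "(0, y, z) \<in> {v. (n1, n2, n3) \<bullet> v = 0} \<inter> yz_plane" "w = proj_yz (0, y, z)"
    by (simp_all add: proj_yz_def yz_plane_def inner_Pair)
  then show "w \<in> proj_yz ` ({v. (n1, n2, n3) \<bullet> v = 0} \<inter> yz_plane)" by blast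
qed

lemma proj_yz_diagonal_cone_inter_sphere:
  fixes q1 q2 q3 :: real
  shows "proj_yz ` ({(x, y, z). q1 * x\<^sup>2 + q2 * y\<^sup>2 + q3 * z\<^sup>2 = 0} \<inter> sphere 0 1)
           \<subseteq> {(y, z). (q2 - q1) * y\<^sup>2 - (q1 - q3) * z\<^sup>2 + q1 = 0}"
proof
  fix w assume "w \<in> proj_yz ` ({(x, y, z). q1 * x\<^sup>2 + q2 * y\<^sup>2 + q3 * z\<^sup>2 = 0} \<inter> sphere 0 1)"
  then obtain x y z where w: "w = (y, z)" and cone: "q1 * x\<^sup>2 + q2 * y\<^sup>2 + q3 * z\<^sup>2 = 0"
    and "norm (x, y, z) = 1" by (auto simp: proj_yz_def)
  then have "x\<^sup>2 + y\<^sup>2 + z\<^sup>2 = 1"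
    using power2_norm_eq_inner[of "(x, y, z)"] by (simp add: inner_Pair power2_eq_square)
  then have "(q2 - q1) * y\<^sup>2 - (q1 - q3) * z\<^sup>2 + q1 = 0"
    using cone by algebra
  then show "w \<in> {(y, z). (q2 - q1) * y\<^sup>2 - (q1 - q3) * z\<^sup>2 + q1 = 0}"
    by (simp add: w)
qed

theorem mainTheorem8:
  fixes a b c :: real
  assumes "a > b" and "b > 0" and "c > 0"
  shows "\<exists>P1 P2. P1 \<noteq> P2 \<and> {P. cyclic_plane (cone_C a b c) P} = {P1, P2} \<and>
           (\<exists>H. proj_yz ` (cone_C a b c \<inter> sphere 0 1) \<subseteq> H \<and>
                hyperbola_with_asymptotes H
                  {proj_yz ` (P1 \<inter> yz_plane), proj_yz ` (P2 \<inter> yz_plane)})"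
proof -
  define q1 q2 q3 where "q1 = 1 / a\<^sup>2" and "q2 = 1 / b\<^sup>2" and "q3 = - (1 / c\<^sup>2)"
  have q: "q3 < 0" "0 < q1" "q1 < q2"
    using assms by (simp_all add: q1_def q2_def q3_def divide_simps power_strict_mono)
  have cone: "cone_C a b c = {(x, y, z). q1 * x\<^sup>2 + q2 * y\<^sup>2 + q3 * z\<^sup>2 = 0}"
    by (simp add: cone_C_def q1_def q2_def q3_def)
  define \<alpha> \<beta> where "\<alpha> = sqrt (q2 - q1)" and "\<beta> = sqrt (q1 - q3)"
  have \<alpha>: "\<alpha> > 0" "\<alpha>\<^sup>2 = q2 - q1" and \<beta>: "\<beta> > 0" "\<beta>\<^sup>2 = q1 - q3"
    using q by (simp_all add: \<alpha>_def \<beta>_def)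
  let ?P1 = "{v. (0, \<alpha>, \<beta>) \<bullet> v = 0}" and ?P2 = "{v. (0, \<alpha>, - \<beta>) \<bullet> v = 0}"
  have "(0, \<beta>, - \<alpha>) \<in> ?P1" "(0, \<beta>, - \<alpha>) \<notin> ?P2"
    using \<alpha> \<beta> by (simp_all add: inner_Pair algebra_simps)
  then have "?P1 \<noteq> ?P2" by blast
  moreover have "{P. cyclic_plane (cone_C a b c) P} = {?P1, ?P2}"
    unfolding cone \<alpha>_def \<beta>_def using q by (rule cyclic_planes_of_diagonal_cone)
  moreover have "proj_yz ` (cone_C a b c \<inter> sphere 0 1) \<subseteq> {(y, z). \<alpha>\<^sup>2 * y\<^sup>2 - \<beta>\<^sup>2 * z\<^sup>2 + q1 = 0}"
    unfolding cone \<alpha>(2) \<beta>(2) by (rule proj_yz_diagonal_cone_inter_sphere)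
  moreover have "hyperbola_with_asymptotes {(y, z). \<alpha>\<^sup>2 * y\<^sup>2 - \<beta>\<^sup>2 * z\<^sup>2 + q1 = 0}
      {proj_yz ` (?P1 \<inter> yz_plane), proj_yz ` (?P2 \<inter> yz_plane)}"
    using hyperbola_with_asymptotes_standard[OF \<alpha>(1) \<beta>(1)] q
    by (simp add: proj_yz_hyperplane_inter_yz_plane)
  ultimately show ?thesis
    by - (rule exI[of _ ?P1], rule exI[of _ ?P2], blast)
qed

end
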